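(* Let $t$ be a well-formed tree over $\tilde A_{i,k}$, $\Sigma$ a winning strategy of $P$ in $\mathcal G(t)$, $u\in\Sigma$, and $j$ a $P$-losing number. Then $$s(u,\Sigma){\upharpoonright}j=\sup_{w\in\mathrm{act}_u(\Sigma,j)}\big(s(w,\Sigma){\upharpoonright}j\big)=\sup_{w\in\mathrm{act}_u(\Sigma,j)}\big(s(\varepsilon,\Sigma{\upharpoonright}w){\upharpoonright}j\big),$$ where the empty supremum is the all-zero tuple.
   Context: Fix natural numbers $i<k$. Trees over a ranked alphabet are partial maps $t:\omega^*\to A$ with non-empty prefix-closed domain where a node with an $m$-ary label has exactly the children $u0,\ldots,u(m-1)$; $t{\upharpoonright}u$ is the subtree at $u$, $\preceq$ the prefix order. The alphabet $\tilde A_{i,k}$ has unary letters $p_i,\ldots,p_k$, a unary letter $\sim$, and binary letters $c_1,c_2$. Players $1,2$; $\bar P$ the opponent. Well-formed: no branch has infinitely many $\sim$. A node $u$ is switched if an odd number of strict prefixes $w\prec u$ have $t(w)=\sim$, kept otherwise. The game $\mathcal G(t)$: positions are nodes, moves to children, start at the root; $u$ is controlled by $P$ iff ($u$ kept and $t(u)=c_P$) or ($u$ switched and $t(u)=c_{\bar P}$). An infinite play is won by player 1 iff it is (eventually) kept and the least $j$ with infinitely many nodes labelled $p_j$ is even, or (eventually) switched and this $j$ is odd (take $j=k$ if none occurs infinitely often). A strategy of $P$ is a set $\Sigma\subseteq\mathrm{dom}(t)$ containing the root, prefix-closed, where each $u\in\Sigma$ controlled by $P$ has exactly one child in $\Sigma$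 and every other $u\in\Sigma$ has all children in $\Sigma$; winning if every branch all of whose prefixes lie in $\Sigma$ is won by $P$. For $u\in\Sigma$, $\Sigma{\upharpoonright}u=\{w: uw\in\Sigma\}$; when no strict prefix of $u$ is labelled $\sim$ it is a winning strategy of $P$ in $\mathcal G(t{\upharpoonright}u)$, and $s(\cdot,\Sigma{\upharpoonright}u)$ is computed with respect to the tree $t{\upharpoonright}u$. $P$-losing numbers: $j\in\{i,\ldots,k\}$ odd for $P=1$, even for $P=2$; $i',k'$ least/largest. Tuples $(\theta_{i'},\theta_{i'+2},\ldots,\theta_{k'})$ of countable ordinals are ordered lexicographically (smaller index more significant), suprema in this order; for a $P$-losing $j$, $(\theta_{i'},\ldots,\theta_{k'}){\upharpoonright}j=(\theta_{i'},\ldots,\theta_j)$. A node $u\in\Sigma$ is active if $t(u)=p_j$ for a $P$-losing $j$ and no strict prefix $w\prec u$ has $t(w)=\sim$ or $t(w)=p_{j'}$ with $j'<j$; $\mathrm{act}(\Sigma)$ is the set of active nodes, and $\mathrm{act}_u(\Sigma,j)=\{w\in\mathrm{act}(\Sigma): u\preceq w,\ t(w)=p_{j''}\text{ with }j''\le j\}$. $u\gg w$ iff $u,w\in\Sigma$, $u\prec w$ and some $w'\in\mathrm{act}(\Sigma)$ has $u\preceq w'\preceq w$ (well-founded for winning $\Sigma$). $\mathrm{succ}_u(\Sigma)$ is the set of $\preceq$-minimal elements of $\{w\in\mathrm{act}(\Sigma):u\preceq w\}$. The map $s(\cdot,\Sigma)$ is defined by well-founded recursion along $\gg$: (a) if $u\in\mathrm{act}(\Sigma)$,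 $t(u)=p_j$ and $s(u0,\Sigma)=(\theta_{i'},\ldots,\theta_{k'})$, then $s(u,\Sigma)=(\theta_{i'},\ldots,\theta_{j-2},\theta_j+1,0,\ldots,0)$; (b) if $u\notin\mathrm{act}(\Sigma)$, then $s(u,\Sigma)=\sup_{w\in\mathrm{succ}_u(\Sigma)}s(w,\Sigma)$ (empty supremum $=(0,\ldots,0)$). *)

theory Defs
  imports Main "HOL-Library.Countable_Set" "HOL-Library.Sublist"
begin

datatype sym = Pr nat | Sw | C1 | C2
  \<comment> \<open>Pr j = p_j (unary), Sw = the switch letter (unary), C1, C2 binary\<close>

datatype player = Pl1 | Pl2

fun opp :: "player \<Rightarrow> player" where
  "opp Pl1 = Pl2" | "opp Pl2 = Pl1"

fun cP :: "player \<Rightarrow> sym" where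
  "cP Pl1 = C1" | "cP Pl2 = C2"

fun arity :: "sym \<Rightarrow> nat" where
  "arity (Pr _) = 1" | "arity Sw = 1" | "arity C1 = 2" | "arity C2 = 2"

definition alph :: "nat \<Rightarrow> nat \<Rightarrow> sym set" where
  "alph i k = {Pr j | j. i \<le> j \<and> j \<le> k} \<union> {Sw, C1, C2}"

type_synonym tree = "nat list \<Rightarrow> sym option"

definition is_tree :: "nat \<Rightarrow> nat \<Rightarrow> tree \<Rightarrow> bool" where
  "is_tree i k t \<longleftrightarrow> t [] \<noteq> None
     \<and> (\<forall>u v. t (u @ v) \<noteq> None \<longrightarrow> t u \<noteq> None)
     \<and> (\<forall>u a. t u = Some a \<longrightarrow> a \<in> alph i k \<and> (\<forall>n. t (u @ [n]) \<noteq> None \<longleftrightarrow> n < arity a))"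

definition subtree :: "tree \<Rightarrow> nat list \<Rightarrow> tree" where
  "subtree t u = (\<lambda>w. t (u @ w))"

definition node :: "(nat \<Rightarrow> nat) \<Rightarrow> nat \<Rightarrow> nat list" where
  "node \<pi> n = map \<pi> [0..<n]"

definition branch :: "tree \<Rightarrow> (nat \<Rightarrow> nat) \<Rightarrow> bool" where
  "branch t \<pi> \<longleftrightarrow> (\<forall>n. t (node \<pi> n) \<noteq> None)"

definition well_formed :: "tree \<Rightarrow> bool" where
  "well_formed t \<longleftrightarrow> (\<forall>\<pi>. branch t \<pi> \<longrightarrow> finite {n. t (node \<pi> n) = Some Sw})"

definition switched :: "tree \<Rightarrow> nat list \<Rightarrow> bool" where
  "switched t u \<longleftrightarrow> odd (card {w. strict_prefix w u \<and> t w = Some Sw})"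

definition controlled :: "tree \<Rightarrow> player \<Rightarrow> nat list \<Rightarrow> bool" where
  "controlled t P u \<longleftrightarrow> (\<not> switched t u \<and> t u = Some (cP P)) \<or> (switched t u \<and> t u = Some (cP (opp P)))"

definition inf_label :: "tree \<Rightarrow> (nat \<Rightarrow> nat) \<Rightarrow> nat \<Rightarrow> bool" where
  "inf_label t \<pi> j \<longleftrightarrow> infinite {n. t (node \<pi> n) = Some (Pr j)}"

definition jmin :: "nat \<Rightarrow> tree \<Rightarrow> (nat \<Rightarrow> nat) \<Rightarrow> nat" where
  "jmin k t \<pi> = (if \<exists>j. inf_label t \<pi> j then (LEAST j. inf_label t \<pi> j) else k)"

definition won1 :: "nat \<Rightarrow> tree \<Rightarrow> (nat \<Rightarrow> nat) \<Rightarrow> bool" where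
  "won1 k t \<pi> \<longleftrightarrow>
     ((\<exists>N. \<forall>n\<ge>N. \<not> switched t (node \<pi> n)) \<and> even (jmin k t \<pi>))
   \<or> ((\<exists>N. \<forall>n\<ge>N. switched t (node \<pi> n)) \<and> odd (jmin k t \<pi>))"

definition wins :: "nat \<Rightarrow> tree \<Rightarrow> player \<Rightarrow> (nat \<Rightarrow> nat) \<Rightarrow> bool" where
  "wins k t P \<pi> \<longleftrightarrow> (if P = Pl1 then won1 k t \<pi> else \<not> won1 k t \<pi>)"

definition strategy :: "tree \<Rightarrow> player \<Rightarrow> nat list set \<Rightarrow> bool" where
  "strategy t P S \<longleftrightarrow> [] \<in> S \<and> (\<forall>u\<in>S. t u \<noteq> None)
     \<and> (\<forall>u v. u @ v \<in> S \<longrightarrow> u \<in> S)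
     \<and> (\<forall>u\<in>S. (controlled t P u \<longrightarrow> (\<exists>!n. u @ [n] \<in> S))
             \<and> (\<not> controlled t P u \<longrightarrow> (\<forall>n. t (u @ [n]) \<noteq> None \<longrightarrow> u @ [n] \<in> S)))"

definition winning_strategy :: "nat \<Rightarrow> tree \<Rightarrow> player \<Rightarrow> nat list set \<Rightarrow> bool" where
  "winning_strategy k t P S \<longleftrightarrow> strategy t P S
     \<and> (\<forall>\<pi>. (\<forall>n. node \<pi> n \<in> S) \<longrightarrow> wins k t P \<pi>)"

definition substrat :: "nat list set \<Rightarrow> nat list \<Rightarrow> nat list set" where
  "substrat S u = {w. u @ w \<in> S}"

text \<open>Countable ordinals are modelled by an arbitrary well-order in which every
 countable set has a strict upper bound (e.g. omega_1).\<close>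
definition countably_bounded :: "'o::wellorder itself \<Rightarrow> bool" where
  "countably_bounded _ \<longleftrightarrow> (\<forall>A::'o set. countable A \<longrightarrow> (\<exists>b. \<forall>a\<in>A. a < b))"

definition ozero :: "'o::wellorder" where
  "ozero = (LEAST x. True)"

definition osuc :: "'o::wellorder \<Rightarrow> 'o" where
  "osuc a = (LEAST b. a < b)"

definition losing :: "nat \<Rightarrow> nat \<Rightarrow> player \<Rightarrow> nat \<Rightarrow> bool" where
  "losing i k P j \<longleftrightarrow> i \<le> j \<and> j \<le> k \<and> (if P = Pl1 then odd j else even j)"

definition Lset :: "nat \<Rightarrow> nat \<Rightarrow> player \<Rightarrow> nat set" where
  "Lset i k P = {j. losing i k P j}"

text \<open>A tuple indexed by the finite index set L is represented by a function
 nat => 'o which is ozero outside L. Smaller indices are more significant.\<close>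
definition lexless :: "nat set \<Rightarrow> (nat \<Rightarrow> 'o::wellorder) \<Rightarrow> (nat \<Rightarrow> 'o) \<Rightarrow> bool" where
  "lexless L x y \<longleftrightarrow> (\<exists>j\<in>L. x j < y j \<and> (\<forall>m\<in>L. m < j \<longrightarrow> x m = y m))"

definition lexle :: "nat set \<Rightarrow> (nat \<Rightarrow> 'o::wellorder) \<Rightarrow> (nat \<Rightarrow> 'o) \<Rightarrow> bool" where
  "lexle L x y \<longleftrightarrow> (\<forall>m\<in>L. x m = y m) \<or> lexless L x y"

definition supported :: "nat set \<Rightarrow> (nat \<Rightarrow> 'o::wellorder) \<Rightarrow> bool" where
  "supported L x \<longleftrightarrow> (\<forall>m. m \<notin> L \<longrightarrow> x m = ozero)"

text \<open>Supremum (least upper bound) in the lexicographic order on L-tuples;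
 the empty supremum is the all-zero tuple.\<close>
definition lex_sup :: "nat set \<Rightarrow> (nat \<Rightarrow> 'o::wellorder) set \<Rightarrow> (nat \<Rightarrow> 'o)" where
  "lex_sup L X = (THE y. supported L y \<and> (\<forall>x\<in>X. lexle L x y)
      \<and> (\<forall>z. supported L z \<longrightarrow> (\<forall>x\<in>X. lexle L x z) \<longrightarrow> lexle L y z))"

definition restr :: "nat \<Rightarrow> (nat \<Rightarrow> 'o::wellorder) \<Rightarrow> (nat \<Rightarrow> 'o)" where
  "restr j x = (\<lambda>m. if m \<le> j then x m else ozero)"

definition bump :: "nat \<Rightarrow> (nat \<Rightarrow> 'o::wellorder) \<Rightarrow> (nat \<Rightarrow> 'o)" where
  "bump j x = (\<lambda>m. if m < j then x m else if m = j then osuc (x j) else ozero)"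

definition act :: "nat \<Rightarrow> nat \<Rightarrow> player \<Rightarrow> tree \<Rightarrow> nat list set \<Rightarrow> nat list set" where
  "act i k P t S = {u \<in> S. \<exists>j. t u = Some (Pr j) \<and> losing i k P j
      \<and> (\<forall>w. strict_prefix w u \<longrightarrow> t w \<noteq> Some Sw \<and> (\<forall>j'. t w = Some (Pr j') \<longrightarrow> \<not> j' < j))}"

definition act_at :: "nat \<Rightarrow> nat \<Rightarrow> player \<Rightarrow> tree \<Rightarrow> nat list set \<Rightarrow> nat list \<Rightarrow> nat \<Rightarrow> nat list set" where
  "act_at i k P t S u j = {w \<in> act i k P t S. prefix u w \<and> (\<exists>j''. t w = Some (Pr j'') \<and> j'' \<le> j)}"

definition succs :: "nat \<Rightarrow> nat \<Rightarrow> player \<Rightarrow> tree \<Rightarrow> nat list set \<Rightarrow> nat list \<Rightarrow> nat list set" where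
  "succs i k P t S u = {w \<in> act i k P t S. prefix u w
      \<and> \<not> (\<exists>w'\<in>act i k P t S. prefix u w' \<and> strict_prefix w' w)}"

definition s_eqs :: "nat \<Rightarrow> nat \<Rightarrow> player \<Rightarrow> tree \<Rightarrow> nat list set \<Rightarrow> (nat list \<Rightarrow> nat \<Rightarrow> 'o::wellorder) \<Rightarrow> bool" where
  "s_eqs i k P t S f \<longleftrightarrow> (\<forall>u\<in>S.
      (u \<in> act i k P t S \<longrightarrow> (\<forall>j. t u = Some (Pr j) \<longrightarrow> f u = bump j (f (u @ [0]))))
    \<and> (u \<notin> act i k P t S \<longrightarrow> f u = lex_sup (Lset i k P) (f ` succs i k P t S u)))"

definition stup :: "nat \<Rightarrow> nat \<Rightarrow> player \<Rightarrow> tree \<Rightarrow> nat list set \<Rightarrow> nat list \<Rightarrow> nat \<Rightarrow> 'o::wellorder" where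
  "stup i k P t S = (THE f. s_eqs i k P t S f \<and> (\<forall>u. u \<notin> S \<longrightarrow> f u = (\<lambda>_. ozero)))"

end

theory Submission
  imports Defs
begin

(* The signature is built by well-founded recursion: an active node raises the coordinate of
   its priority, any other node takes the lexicographic supremum over its nearest active
   descendants. Truncating tuples at an index j commutes with these suprema (beyond j
   every candidate tuple is dominated by a strict bound on the countably many coordinate
   values, so truncation cannot lower the supremum), and raising a coordinate above j is
   invisible after truncation. Induction along the recursion then shows that the truncated
   signature of u is the supremum over the active nodes below u with priority at most j.
   The recursion is well founded because on a branch through infinitely many active nodes no
   switch occurs and the least active priority, a losing number, recurs forever, so such a
   branch is lost by P. Below an active node w the recursion is merely shifted, which gives
   s(epsilon, Sigma|w) = s(w, Sigma). *)

section \<open>Lexicographic order on tuples\<close>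

lemma lexle_cong: "\<forall>m\<in>L. x m = x' m \<Longrightarrow> \<forall>m\<in>L. y m = y' m \<Longrightarrow> lexle L x y = lexle L x' y'"
  unfolding lexle_def lexless_def by auto

lemma lexless_cong: "\<forall>m\<in>L. x m = x' m \<Longrightarrow> \<forall>m\<in>L. y m = y' m \<Longrightarrow> lexless L x y = lexless L x' y'"
  unfolding lexless_def by auto

lemma lexle_refl [simp]: "lexle L x x"
  by (simp add: lexle_def)

lemma lexless_not_lexle: "lexless L x y \<Longrightarrow> \<not> lexle L y x"
proof
  assume "lexless L x y" "lexle L y x"
  obtain j1 where j1: "j1 \<in> L" "x j1 < y j1" "\<forall>m\<in>L. m < j1 \<longrightarrow> x m = y m"
    using \<open>lexless L x y\<close> unfolding lexless_def by blast
  show False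
  proof (cases "\<forall>m\<in>L. y m = x m")
    case False
    then obtain j2 where j2: "j2 \<in> L" "y j2 < x j2" "\<forall>m\<in>L. m < j2 \<longrightarrow> y m = x m"
      using \<open>lexle L y x\<close> unfolding lexle_def lexless_def by blast
    show False
      using j1 j2 by (cases j1 j2 rule: linorder_cases) auto
  qed (use j1 in simp)
qed

lemma lexle_Int_atMost: "lexle L x y \<Longrightarrow> lexle (L \<inter> {..j}) x y"
proof (cases "\<forall>m\<in>L. x m = y m")
  case False
  assume "lexle L x y"
  then obtain j1 where j1: "j1 \<in> L" "x j1 < y j1" "\<forall>m\<in>L. m < j1 \<longrightarrow> x m = y m"
    using False unfolding lexle_def lexless_def by blast
  show ?thesis
  proof (cases "j1 \<le> j")
    case True
    then show ?thesis
      unfolding lexle_def lexless_def using j1 by (intro disjI2 bexI[of _ j1]) auto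
  qed (use j1 in \<open>auto simp: lexle_def\<close>)
qed (simp add: lexle_def)

lemma lexless_Int_atMost: "lexless (L \<inter> {..j}) x y \<Longrightarrow> lexless L x y"
  unfolding lexless_def by fastforce

lemma lexle_trans: "lexle L x y \<Longrightarrow> lexle L y z \<Longrightarrow> lexle L x z"
proof -
  assume xy: "lexle L x y" and yz: "lexle L y z"
  show ?thesis
  proof (cases "\<forall>m\<in>L. x m = y m")
    case True
    then show ?thesis using lexle_cong[of L x y z z] yz by simp
  next
    case False
    then obtain j1 where j1: "j1 \<in> L" "x j1 < y j1" "\<forall>m\<in>L. m < j1 \<longrightarrow> x m = y m"
      using xy unfolding lexle_def lexless_def by blast
    show ?thesis
    proof (cases "\<forall>m\<in>L. y m = z m")
      case True
      then show ?thesis using lexle_cong[of L x x y z] xy by simp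
    next
      case False
      then obtain j2 where j2: "j2 \<in> L" "y j2 < z j2" "\<forall>m\<in>L. m < j2 \<longrightarrow> y m = z m"
        using yz unfolding lexle_def lexless_def by blast
      have "lexless L x z"
      proof (cases j1 j2 rule: linorder_cases)
        case less
        then show ?thesis unfolding lexless_def using j1 j2 by (intro bexI[of _ j1]) auto
      next
        case equal
        then show ?thesis unfolding lexless_def using j1 j2
          by (intro bexI[of _ j1]) (auto intro: order.strict_trans)
      next
        case greater
        then show ?thesis unfolding lexless_def using j1 j2 by (intro bexI[of _ j2]) auto
      qed
      then show ?thesis unfolding lexle_def by blast
    qed
  qed
qed

lemma least_difference:
  fixes L :: "nat set"
  assumes "\<not> (\<forall>m\<in>L. x m = y m)"
  obtains j where "j \<in> L" "x j \<noteq> y j" "\<forall>m\<in>L. m < j \<longrightarrow> x m = y m"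
proof
  define j where "j = (LEAST m. m \<in> L \<and> x m \<noteq> y m)"
  show "j \<in> L" "x j \<noteq> y j"
    using assms LeastI_ex[of "\<lambda>m. m \<in> L \<and> x m \<noteq> y m"] by (auto simp: j_def)
  show "\<forall>m\<in>L. m < j \<longrightarrow> x m = y m"
    using not_less_Least j_def by blast
qed

lemma lexle_linear: "lexle L x y \<or> lexle L y x"
proof (cases "\<forall>m\<in>L. x m = y m")
  case False
  then obtain j where j: "j \<in> L" "x j \<noteq> y j" "\<forall>m\<in>L. m < j \<longrightarrow> x m = y m"
    by (rule least_difference)
  then consider "x j < y j" | "y j < x j" by fastforce
  then show ?thesis
    by cases (use j in \<open>auto simp: lexle_def lexless_def\<close>)
qed (simp add: lexle_def)

lemma not_lexle: "\<not> lexle L x y \<Longrightarrow> lexless L y x"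
  using lexle_linear[of L x y] unfolding lexle_def by auto

lemma lexle_antisym: "lexle L x y \<Longrightarrow> lexle L y x \<Longrightarrow> \<forall>m\<in>L. x m = y m"
  using lexless_not_lexle unfolding lexle_def by blast

lemma lexle_if_pointwise_le:
  assumes le: "\<forall>m\<in>L. x m \<le> y m"
  shows "lexle L x y"
proof (cases "\<forall>m\<in>L. x m = y m")
  case False
  then obtain j where j: "j \<in> L" "x j \<noteq> y j" "\<forall>m\<in>L. m < j \<longrightarrow> x m = y m"
    by (rule least_difference)
  with le have "x j < y j" by (simp add: order.strict_iff_order)
  with j show ?thesis unfolding lexle_def lexless_def by blast
qed (simp add: lexle_def)

lemma lexle_Int_atMost_greaterThan:
  assumes low: "lexle (L \<inter> {..j}) x y" and high: "lexle (L \<inter> {j<..}) x y"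
  shows "lexle L x y"
proof (cases "\<forall>m\<in>L \<inter> {..j}. x m = y m")
  case True
  show ?thesis
  proof (cases "\<forall>m\<in>L \<inter> {j<..}. x m = y m")
    case True2: True
    have "\<forall>m\<in>L. x m = y m"
    proof
      fix m assume "m \<in> L"
      with True True2 show "x m = y m" by (cases "m \<le> j") auto
    qed
    then show ?thesis by (simp add: lexle_def)
  next
    case False
    then obtain j1 where j1: "j1 \<in> L \<inter> {j<..}" "x j1 < y j1" "\<forall>m\<in>L \<inter> {j<..}. m < j1 \<longrightarrow> x m = y m"
      using high unfolding lexle_def lexless_def by blast
    have "\<forall>m\<in>L. m < j1 \<longrightarrow> x m = y m"
    proof (intro ballI impI)
      fix m assume "m \<in> L" "m < j1"
      with True j1 show "x m = y m" by (cases "m \<le> j") auto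
    qed
    with j1 show ?thesis
      unfolding lexle_def lexless_def by blast
  qed
next
  case False
  then obtain j0 where "j0 \<in> L \<inter> {..j}" "x j0 < y j0" "\<forall>m\<in>L \<inter> {..j}. m < j0 \<longrightarrow> x m = y m"
    using low unfolding lexle_def lexless_def by blast
  then show ?thesis
    unfolding lexle_def lexless_def by (intro disjI2 bexI[of _ j0]) auto
qed

lemma lexle_insert_iff: "x a = y a \<Longrightarrow> lexle (insert a L) x y \<longleftrightarrow> lexle L x y"
  unfolding lexle_def lexless_def by auto

lemma lexle_imp_le_first:
  assumes "a \<in> L" "\<forall>b\<in>L. a \<le> b" "lexle L x y"
  shows "x a \<le> y a"
proof (cases "\<forall>m\<in>L. x m = y m")
  case False
  then obtain j where "j \<in> L" "x j < y j" "\<forall>m\<in>L. m < j \<longrightarrow> x m = y m"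
    using assms(3) unfolding lexle_def lexless_def by blast
  with assms(1,2) show ?thesis by (cases "j = a") (auto simp: order.order_iff_strict)
qed (use assms in simp)

lemma lexle_if_less_first: "a \<in> L \<Longrightarrow> \<forall>b\<in>L. a \<le> b \<Longrightarrow> x a < y a \<Longrightarrow> lexle L x y"
  unfolding lexle_def lexless_def by (intro disjI2 bexI[of _ a]) auto

definition is_lex_sup :: "nat set \<Rightarrow> (nat \<Rightarrow> 'o::wellorder) set \<Rightarrow> (nat \<Rightarrow> 'o) \<Rightarrow> bool" where
  "is_lex_sup L X y \<longleftrightarrow> supported L y \<and> (\<forall>x\<in>X. lexle L x y)
      \<and> (\<forall>z. supported L z \<longrightarrow> (\<forall>x\<in>X. lexle L x z) \<longrightarrow> lexle L y z)"

lemma is_lex_supI: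
  "supported L y \<Longrightarrow> (\<And>x. x \<in> X \<Longrightarrow> lexle L x y)
    \<Longrightarrow> (\<And>z. supported L z \<Longrightarrow> \<forall>x\<in>X. lexle L x z \<Longrightarrow> lexle L y z) \<Longrightarrow> is_lex_sup L X y"
  unfolding is_lex_sup_def by blast

lemma is_lex_sup_supported: "is_lex_sup L X y \<Longrightarrow> supported L y"
  unfolding is_lex_sup_def by blast

lemma is_lex_sup_upper: "is_lex_sup L X y \<Longrightarrow> x \<in> X \<Longrightarrow> lexle L x y"
  unfolding is_lex_sup_def by blast

lemma is_lex_sup_least:
  "is_lex_sup L X y \<Longrightarrow> supported L z \<Longrightarrow> \<forall>x\<in>X. lexle L x z \<Longrightarrow> lexle L y z"
  unfolding is_lex_sup_def by blast

lemma supported_eqI: "supported L x \<Longrightarrow> supported L y \<Longrightarrow> \<forall>m\<in>L. x m = y m \<Longrightarrow> x = y"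
  unfolding supported_def by (metis ext)

lemma is_lex_sup_unique: "is_lex_sup L X y \<Longrightarrow> is_lex_sup L X y' \<Longrightarrow> y = y'"
  unfolding is_lex_sup_def by (meson lexle_antisym supported_eqI)

lemma lex_sup_eqI: "is_lex_sup L X y \<Longrightarrow> lex_sup L X = y"
  unfolding lex_sup_def by (rule the_equality) (use is_lex_sup_unique in \<open>auto simp: is_lex_sup_def\<close>)

lemma countably_bounded_imageE:
  fixes f :: "'a \<Rightarrow> 'o::wellorder"
  assumes "countably_bounded TYPE('o)" and "countable A"
  obtains b where "\<forall>a\<in>A. f a < b"
  using assms unfolding countably_bounded_def by (metis countable_image imageI)

lemma osuc_gt:
  assumes "countably_bounded TYPE('o::wellorder)"
  shows "(a :: 'o) < osuc a"
proof -
  obtain b :: 'o where "a < b"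
    using countably_bounded_imageE[OF assms, of "{a}" id] by auto
  then show ?thesis unfolding osuc_def by (rule LeastI)
qed

lemma lexle_fun_upd_left [simp]: "a \<notin> L \<Longrightarrow> lexle L (x(a := v)) y \<longleftrightarrow> lexle L x y"
  by (rule lexle_cong) auto

lemma lexle_fun_upd_right [simp]: "a \<notin> L \<Longrightarrow> lexle L x (y(a := v)) \<longleftrightarrow> lexle L x y"
  by (rule lexle_cong) auto

lemma is_lex_sup_insert_min:
  assumes a_min: "\<forall>b\<in>L. a < b"
    and c_ub: "\<forall>x\<in>X. x a \<le> c" and c_least: "\<And>d. \<forall>x\<in>X. x a \<le> d \<Longrightarrow> c \<le> d"
    and sup: "is_lex_sup L {x\<in>X. x a = c} y"
  shows "is_lex_sup (insert a L) X (y(a := c))"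
proof -
  have first: "a \<in> insert a L" "\<forall>b\<in>insert a L. a \<le> b"
    using a_min by auto
  have "a \<notin> L"
    using a_min by blast
  show ?thesis
  proof (rule is_lex_supI)
    show "supported (insert a L) (y(a := c))"
      using is_lex_sup_supported[OF sup] by (auto simp: supported_def)
  next
    fix x assume x: "x \<in> X"
    show "lexle (insert a L) x (y(a := c))"
    proof (cases "x a < c")
      case False
      with c_ub x have "x a = c" by (meson order.not_eq_order_implies_strict)
      with x have "lexle L x y" by (intro is_lex_sup_upper[OF sup]) simp
      with \<open>x a = c\<close> \<open>a \<notin> L\<close> show ?thesis by (simp add: lexle_insert_iff)
    qed (simp add: lexle_if_less_first[OF first])
  next
    fix z assume z: "supported (insert a L) z" "\<forall>x\<in>X. lexle (insert a L) x z"
    have "\<forall>x\<in>X. x a \<le> z a"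
      using lexle_imp_le_first[OF first] z(2) by blast
    then have "c \<le> z a" by (rule c_least)
    show "lexle (insert a L) (y(a := c)) z"
    proof (cases "c < z a")
      case False
      with \<open>c \<le> z a\<close> have cz: "z a = c" by simp
      have "lexle L y (z(a := ozero))"
      proof (rule is_lex_sup_least[OF sup])
        show "supported L (z(a := ozero))"
          using z(1) by (auto simp: supported_def)
        show "\<forall>x\<in>{x \<in> X. x a = c}. lexle L x (z(a := ozero))"
          using z(2) cz \<open>a \<notin> L\<close> by (auto simp: lexle_insert_iff)
      qed
      with cz \<open>a \<notin> L\<close> show ?thesis by (simp add: lexle_insert_iff)
    qed (simp add: lexle_if_less_first[OF first])
  qed
qed

lemma is_lex_sup_exists:
  assumes ords: "countably_bounded TYPE('o::wellorder)" and "finite L" and "countable X"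
  shows "\<exists>y. is_lex_sup L X (y :: nat \<Rightarrow> 'o)"
  using assms(2,3)
proof (induction L arbitrary: X rule: finite_linorder_min_induct)
  case empty
  have "is_lex_sup {} X (\<lambda>_. ozero)"
    unfolding is_lex_sup_def supported_def lexle_def by simp
  then show ?case by blast
next
  case (insert a L)
  obtain b :: 'o where "\<forall>x\<in>X. x a < b"
    using countably_bounded_imageE[OF ords insert.prems, of "\<lambda>x. x a"] by blast
  define c where "c = (LEAST c. \<forall>x\<in>X. x a \<le> c)"
  have c_ub: "\<forall>x\<in>X. x a \<le> c"
    unfolding c_def by (rule LeastI[of _ b]) (use \<open>\<forall>x\<in>X. x a < b\<close> in auto)
  have c_least: "\<And>d. \<forall>x\<in>X. x a \<le> d \<Longrightarrow> c \<le> d"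
    unfolding c_def by (rule Least_le)
  have "countable {x\<in>X. x a = c}"
    using insert.prems by simp
  then obtain y where "is_lex_sup L {x\<in>X. x a = c} y"
    using insert.IH by blast
  then have "is_lex_sup (insert a L) X (y(a := c))"
    using is_lex_sup_insert_min[OF insert.hyps(2) c_ub c_least] by blast
  then show ?case by blast
qed

lemma is_lex_sup_UN:
  assumes parts: "\<And>w. w \<in> W \<Longrightarrow> is_lex_sup L (X w) (f w)"
    and sup: "is_lex_sup L (f ` W) y"
  shows "is_lex_sup L (\<Union>w\<in>W. X w) y"
proof (rule is_lex_supI)
  show "supported L y"
    using sup by (rule is_lex_sup_supported)
next
  fix x assume "x \<in> (\<Union>w\<in>W. X w)"
  then obtain w where w: "w \<in> W" "x \<in> X w" by blast
  have "lexle L x (f w)"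
    using parts[OF w(1)] w(2) by (rule is_lex_sup_upper)
  moreover have "lexle L (f w) y"
    using sup imageI[OF w(1)] by (rule is_lex_sup_upper)
  ultimately show "lexle L x y"
    by (rule lexle_trans)
next
  fix z assume z: "supported L z" "\<forall>x\<in>\<Union>w\<in>W. X w. lexle L x z"
  have "lexle L (f w) z" if "w \<in> W" for w
    using parts[OF that] z(1) by (rule is_lex_sup_least) (use that z(2) in blast)
  then show "lexle L y z"
    using sup z(1) is_lex_sup_least by blast
qed

lemma is_lex_sup_insert:
  assumes sup: "is_lex_sup L X y" and yz: "lexle L y z" and "supported L z"
  shows "is_lex_sup L (insert z X) z"
proof (rule is_lex_supI)
  fix x assume "x \<in> insert z X"
  then show "lexle L x z"
    using is_lex_sup_upper[OF sup] yz lexle_trans[of L x y z] by auto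
qed (use \<open>supported L z\<close> in auto)

lemma restr_agree: "\<forall>m\<in>L \<inter> {..j}. restr j x m = x m"
  unfolding restr_def by auto

lemma is_lex_sup_restr:
  assumes ords: "countably_bounded TYPE('o::wellorder)" and "countable X"
    and sup: "is_lex_sup L X (y :: nat \<Rightarrow> 'o)"
  shows "is_lex_sup (L \<inter> {..j}) (restr j ` X) (restr j y)"
proof -
  let ?Lj = "L \<inter> {..j}"
  have restr_left: "lexle ?Lj (restr j x) z \<longleftrightarrow> lexle ?Lj x z" for x z :: "nat \<Rightarrow> 'o"
    using lexle_cong[OF restr_agree, where y=z and y'=z] by blast
  have restr_right: "lexle ?Lj x (restr j z) \<longleftrightarrow> lexle ?Lj x z" for x z :: "nat \<Rightarrow> 'o"
    using lexle_cong[OF _ restr_agree, where x=x and x'=x] by blast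
  have "supported ?Lj (restr j y)"
    using sup unfolding is_lex_sup_def supported_def restr_def by auto
  moreover have "lexle ?Lj x (restr j y)" if "x \<in> X" for x
    using that sup lexle_Int_atMost restr_right unfolding is_lex_sup_def by blast
  moreover have "lexle ?Lj (restr j y) z"
    if z: "supported ?Lj z" "\<forall>x\<in>X. lexle ?Lj x z" for z
  proof (rule ccontr)
    assume "\<not> lexle ?Lj (restr j y) z"
    then have "lexless ?Lj z y"
      using not_lexle lexless_cong[OF _ restr_agree, where x=z and x'=z] by blast
    obtain b where b: "\<forall>(x, m)\<in>X \<times> UNIV. x m < b"
      using countably_bounded_imageE[OF ords, of "X \<times> UNIV" "\<lambda>(x, m). x m"] \<open>countable X\<close>
      by auto
    \<comment> \<open>z' would be an upper bound of X strictly below y: it agrees with z up to j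
      and dominates every element of X beyond j.\<close>
    define z' where "z' m = (if m \<le> j then z m else if m \<in> L then b else ozero)" for m
    have z'_agree: "\<forall>m\<in>?Lj. z' m = z m"
      by (simp add: z'_def)
    have "supported L z'"
      using z(1) unfolding supported_def z'_def by auto
    moreover have "lexle L x z'" if "x \<in> X" for x
    proof (rule lexle_Int_atMost_greaterThan)
      show "lexle ?Lj x z'"
        using that z(2) lexle_cong[OF _ z'_agree, where x=x and x'=x] by blast
      show "lexle (L \<inter> {j<..}) x z'"
        using that b by (intro lexle_if_pointwise_le) (auto simp: z'_def less_imp_le)
    qed
    ultimately have "lexle L y z'"
      using sup unfolding is_lex_sup_def by blast
    moreover have "lexless L z' y"
      using \<open>lexless ?Lj z y\<close> lexless_cong[OF z'_agree, where y=y and y'=y] lexless_Int_atMost by blast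
    ultimately show False
      using lexless_not_lexle by blast
  qed
  ultimately show ?thesis
    unfolding is_lex_sup_def by (auto simp: restr_left)
qed

lemma supported_restr: "supported L x \<Longrightarrow> supported (L \<inter> {..j}) (restr j x)"
  unfolding supported_def restr_def by auto

lemma lexle_bump:
  assumes "countably_bounded TYPE('o::wellorder)" and "j \<in> L"
  shows "lexle L (x :: nat \<Rightarrow> 'o) (bump j x)"
  unfolding lexle_def lexless_def bump_def using assms osuc_gt[OF assms(1)]
  by (intro disjI2 bexI[of _ j]) auto

lemma restr_bump: "j < j' \<Longrightarrow> restr j (bump j' x) = restr j x"
  unfolding restr_def bump_def by auto

lemma supported_bump: "supported L x \<Longrightarrow> j \<in> L \<Longrightarrow> supported L (bump j x)"
  unfolding supported_def bump_def by auto

section \<open>Branches through infinitely many active nodes\<close>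

lemma node_prefix: "n \<le> m \<Longrightarrow> prefix (node \<pi> n) (node \<pi> m)"
  unfolding node_def by (metis map_append prefixI upt_add_eq_append zero_le le_add_diff_inverse)

lemma node_strict_prefix: "n < m \<Longrightarrow> strict_prefix (node \<pi> n) (node \<pi> m)"
  using node_prefix[of n m \<pi>] by (auto simp: strict_prefix_def node_def dest: arg_cong[of _ _ length])

lemma strict_prefix_chain_length_ge:
  assumes chain: "\<And>n. strict_prefix (c n) (c (Suc n))"
  shows "n \<le> length (c n)"
proof (induction n)
  case (Suc n)
  then show ?case using prefix_length_less[OF chain[of n]] by simp
qed simp

lemma strict_prefix_chain_on_branch:
  assumes chain: "\<And>n. strict_prefix (c n) (c (Suc n))"
  obtains \<pi> where "\<And>n. node \<pi> (length (c n)) = c n"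
proof
  have prefix_mono: "prefix (c n) (c m)" if "n \<le> m" for n m
    using prefix_order.lift_Suc_mono_le[of c, OF _ that] chain by (simp add: strict_prefix_def)
  fix n
  show "node (\<lambda>m. c (Suc m) ! m) (length (c n)) = c n"
  proof (rule nth_equalityI)
    fix m assume "m < length (node (\<lambda>m. c (Suc m) ! m) (length (c n)))"
    then have m: "m < length (c n)" by (simp add: node_def)
    obtain r r' where "c (max (Suc m) n) = c (Suc m) @ r" "c (max (Suc m) n) = c n @ r'"
      using prefix_mono[of "Suc m" "max (Suc m) n"] prefix_mono[of n "max (Suc m) n"]
      by (auto simp: prefix_def)
    with m strict_prefix_chain_length_ge[of c, OF chain, of "Suc m"] have "c (Suc m) ! m = c n ! m"
      by (metis Suc_le_lessD nth_append)
    with m show "node (\<lambda>m. c (Suc m) ! m) (length (c n)) ! m = c n ! m"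
      by (simp add: node_def)
  qed (simp add: node_def)
qed

definition finitely_active :: "nat \<Rightarrow> nat \<Rightarrow> player \<Rightarrow> tree \<Rightarrow> nat list set \<Rightarrow> bool" where
  "finitely_active i k P t S \<longleftrightarrow> (\<forall>\<pi>. \<not> (\<exists>\<^sub>\<infinity>n. node \<pi> n \<in> act i k P t S))"

lemma actE:
  assumes "u \<in> act i k P t S"
  obtains j where "u \<in> S" "t u = Some (Pr j)" "losing i k P j"
    "\<And>w. strict_prefix w u \<Longrightarrow> t w \<noteq> Some Sw"
    "\<And>w j'. strict_prefix w u \<Longrightarrow> t w = Some (Pr j') \<Longrightarrow> j \<le> j'"
proof -
  from assms obtain j where "u \<in> S" "t u = Some (Pr j)" "losing i k P j"
    "\<forall>w. strict_prefix w u \<longrightarrow> t w \<noteq> Some Sw \<and> (\<forall>j'. t w = Some (Pr j') \<longrightarrow> \<not> j' < j)"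
    unfolding act_def by blast
  then show ?thesis using that by (simp add: not_less)
qed

lemma strategy_prefix_closed: "strategy t P S \<Longrightarrow> prefix u w \<Longrightarrow> w \<in> S \<Longrightarrow> u \<in> S"
  unfolding strategy_def prefix_def by blast

lemma infinitely_active_branch_in_strategy:
  assumes "strategy t P S" and "\<exists>\<^sub>\<infinity>n. node \<pi> n \<in> act i k P t S"
  shows "node \<pi> n \<in> S"
proof -
  obtain m where "n \<le> m" "node \<pi> m \<in> act i k P t S"
    using assms(2) unfolding INFM_nat_le by blast
  then have "node \<pi> m \<in> S" "prefix (node \<pi> n) (node \<pi> m)"
    using node_prefix by (auto elim: actE)
  with assms(1) show ?thesis
    by (blast intro: strategy_prefix_closed)
qed

lemma infinitely_active_branch_kept:
  assumes "\<exists>\<^sub>\<infinity>n. node \<pi> n \<in> act i k P t S"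
  shows "\<not> switched t (node \<pi> n)"
proof -
  obtain m where "n < m" "node \<pi> m \<in> act i k P t S"
    using assms unfolding INFM_nat by blast
  have "t w \<noteq> Some Sw" if "strict_prefix w (node \<pi> n)" for w
  proof -
    have "strict_prefix w (node \<pi> m)"
      using that node_strict_prefix[OF \<open>n < m\<close>] by (rule prefix_order.less_trans)
    with \<open>node \<pi> m \<in> act i k P t S\<close> show ?thesis by (auto elim: actE)
  qed
  then have no_switch: "{w. strict_prefix w (node \<pi> n) \<and> t w = Some Sw} = {}"
    by blast
  show ?thesis
    unfolding switched_def no_switch by simp
qed

text \<open>Along such a branch the labels of active nodes can only decrease, so from some point on
  they all equal the least one.\<close>
lemma infinitely_active_branch_eventual_label:
  assumes inf: "\<exists>\<^sub>\<infinity>n. node \<pi> n \<in> act i k P t S"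
  obtains j0 n0 where "losing i k P j0"
    "\<And>m. n0 < m \<Longrightarrow> node \<pi> m \<in> act i k P t S \<Longrightarrow> t (node \<pi> m) = Some (Pr j0)"
proof -
  define J where "J = {j. \<exists>n. node \<pi> n \<in> act i k P t S \<and> t (node \<pi> n) = Some (Pr j)}"
  obtain n1 where "node \<pi> n1 \<in> act i k P t S"
    using inf unfolding INFM_nat_le by blast
  moreover obtain j1 where "t (node \<pi> n1) = Some (Pr j1)"
    using calculation by (elim actE) blast
  ultimately have "j1 \<in> J" by (auto simp: J_def)
  define j0 where "j0 = (LEAST j. j \<in> J)"
  have "j0 \<in> J" unfolding j0_def by (rule LeastI) (fact \<open>j1 \<in> J\<close>)
  then obtain n0 where n0: "node \<pi> n0 \<in> act i k P t S" "t (node \<pi> n0) = Some (Pr j0)"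
    by (auto simp: J_def)
  have "t (node \<pi> m) = Some (Pr j0)" if late: "n0 < m" "node \<pi> m \<in> act i k P t S" for m
  proof -
    obtain jm where jm: "t (node \<pi> m) = Some (Pr jm)"
      "\<And>w j'. strict_prefix w (node \<pi> m) \<Longrightarrow> t w = Some (Pr j') \<Longrightarrow> jm \<le> j'"
      using late(2) by (elim actE) blast
    have "j0 \<le> jm" unfolding j0_def by (rule Least_le) (use jm(1) late(2) in \<open>auto simp: J_def\<close>)
    moreover have "jm \<le> j0" using jm(2) node_strict_prefix[OF late(1)] n0(2) by blast
    ultimately show ?thesis using jm(1) by simp
  qed
  moreover have "losing i k P j0"
    using n0 by (auto elim: actE)
  ultimately show ?thesis using that by blast
qed

lemma infinitely_active_branch_jmin:
  assumes inf: "\<exists>\<^sub>\<infinity>n. node \<pi> n \<in> act i k P t S"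
  obtains j where "losing i k P j" "jmin k t \<pi> = j"
proof -
  obtain j0 n0 where j0: "losing i k P j0" and late_label:
    "\<And>m. n0 < m \<Longrightarrow> node \<pi> m \<in> act i k P t S \<Longrightarrow> t (node \<pi> m) = Some (Pr j0)"
    using infinitely_active_branch_eventual_label[OF inf] by blast
  have late_active: "\<exists>m>n. node \<pi> m \<in> act i k P t S \<and> t (node \<pi> m) = Some (Pr j0)" for n
  proof -
    obtain m where "max n n0 < m" "node \<pi> m \<in> act i k P t S"
      using inf unfolding INFM_nat by blast
    then show ?thesis using late_label by auto
  qed
  then have "inf_label t \<pi> j0"
    unfolding inf_label_def infinite_nat_iff_unbounded by blast
  moreover have "\<not> inf_label t \<pi> j'" if "j' < j0" for j'
  proof -
    have "t (node \<pi> n) \<noteq> Some (Pr j')" for n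
    proof
      assume label: "t (node \<pi> n) = Some (Pr j')"
      obtain m where m: "n < m" "node \<pi> m \<in> act i k P t S" "t (node \<pi> m) = Some (Pr j0)"
        using late_active by blast
      from m(2) obtain jm where "t (node \<pi> m) = Some (Pr jm)"
        "\<And>w j'. strict_prefix w (node \<pi> m) \<Longrightarrow> t w = Some (Pr j') \<Longrightarrow> jm \<le> j'"
        by (elim actE) blast
      with m(3) node_strict_prefix[OF m(1)] label that show False by fastforce
    qed
    then show ?thesis unfolding inf_label_def by simp
  qed
  ultimately have "(LEAST j. inf_label t \<pi> j) = j0"
    by (intro Least_equality) (auto simp: not_less[symmetric])
  with \<open>inf_label t \<pi> j0\<close> have "jmin k t \<pi> = j0"
    unfolding jmin_def by auto
  with j0 show ?thesis using that by blast
qed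

lemma kept_losing_jmin_not_wins:
  assumes "\<forall>n. \<not> switched t (node \<pi> n)" and "losing i k P (jmin k t \<pi>)"
  shows "\<not> wins k t P \<pi>"
  using assms unfolding wins_def won1_def losing_def by (cases P) auto

lemma winning_strategy_finitely_active:
  assumes win: "winning_strategy k t P S"
  shows "finitely_active i k P t S"
  unfolding finitely_active_def
proof (intro allI notI)
  fix \<pi> assume inf: "\<exists>\<^sub>\<infinity>n. node \<pi> n \<in> act i k P t S"
  then have "wins k t P \<pi>"
    using win infinitely_active_branch_in_strategy unfolding winning_strategy_def by blast
  moreover obtain j where "losing i k P j" "jmin k t \<pi> = j"
    using inf by (rule infinitely_active_branch_jmin)
  moreover have "\<forall>n. \<not> switched t (node \<pi> n)"
    using infinitely_active_branch_kept[OF inf] by blast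
  ultimately show False
    using kept_losing_jmin_not_wins by metis
qed

section \<open>The recursion defining the signature\<close>

text \<open>The pairs (w, u) such that the equations (a), (b) compute s(u) from s(w); this is
  the part of the paper's relation >> that the recursion actually uses.\<close>
definition sig_dep :: "nat \<Rightarrow> nat \<Rightarrow> player \<Rightarrow> tree \<Rightarrow> nat list set \<Rightarrow> (nat list \<times> nat list) set" where
  "sig_dep i k P t S = {(w, u). (u \<in> act i k P t S \<and> w = u @ [0])
      \<or> (u \<notin> act i k P t S \<and> w \<in> succs i k P t S u)}"

lemma succs_act: "w \<in> succs i k P t S u \<Longrightarrow> w \<in> act i k P t S \<and> prefix u w"
  unfolding succs_def by blast

text \<open>A descending chain of the dependency relation is a strict prefix chain meeting an
  active node at every other step, hence a branch with infinitely many active nodes.\<close>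
lemma wf_sig_dep:
  assumes "finitely_active i k P t S"
  shows "wf (sig_dep i k P t S)"
proof (rule wf_iff_no_infinite_down_chain[THEN iffD2], rule notI)
  assume "\<exists>f. \<forall>n. (f (Suc n), f n) \<in> sig_dep i k P t S"
  then obtain f where f: "\<And>n. (f (Suc n), f n) \<in> sig_dep i k P t S" by blast
  have step: "strict_prefix (f n) (f (Suc n)) \<and> (f n \<in> act i k P t S \<or> f (Suc n) \<in> act i k P t S)" for n
  proof -
    have "(f n \<in> act i k P t S \<and> f (Suc n) = f n @ [0])
        \<or> (f n \<notin> act i k P t S \<and> f (Suc n) \<in> succs i k P t S (f n))"
      using f[of n] unfolding sig_dep_def by simp
    then show ?thesis
    proof
      assume "f n \<notin> act i k P t S \<and> f (Suc n) \<in> succs i k P t S (f n)"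
      moreover from this have "f (Suc n) \<in> act i k P t S" "prefix (f n) (f (Suc n))"
        using succs_act by blast+
      ultimately show ?thesis by (auto simp: strict_prefix_def)
    qed (simp add: strict_prefix_def)
  qed
  then have chain: "\<And>n. strict_prefix (f n) (f (Suc n))" by blast
  obtain \<pi> where \<pi>: "\<And>n. node \<pi> (length (f n)) = f n"
    using strict_prefix_chain_on_branch[of f, OF chain] by blast
  have "\<exists>\<^sub>\<infinity>n. node \<pi> n \<in> act i k P t S"
    unfolding INFM_nat_le
  proof
    fix N
    have "N \<le> length (f N)" "N \<le> length (f (Suc N))"
      using strict_prefix_chain_length_ge[of f, OF chain] le_SucI by blast+
    then show "\<exists>n\<ge>N. node \<pi> n \<in> act i k P t S"
      using step[of N] \<pi>[of N] \<pi>[of "Suc N"] by metis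
  qed
  with assms show False
    unfolding finitely_active_def by blast
qed

definition prio :: "tree \<Rightarrow> nat list \<Rightarrow> nat" where
  "prio t u = (case t u of Some (Pr j) \<Rightarrow> j | _ \<Rightarrow> 0)"

definition sig_step :: "nat \<Rightarrow> nat \<Rightarrow> player \<Rightarrow> tree \<Rightarrow> nat list set
    \<Rightarrow> (nat list \<Rightarrow> nat \<Rightarrow> 'o::wellorder) \<Rightarrow> nat list \<Rightarrow> nat \<Rightarrow> 'o" where
  "sig_step i k P t S g u =
    (if u \<notin> S then (\<lambda>_. ozero)
     else if u \<in> act i k P t S then bump (prio t u) (g (u @ [0]))
     else lex_sup (Lset i k P) (g ` succs i k P t S u))"

lemma prio_active:
  assumes "u \<in> act i k P t S"
  shows "t u = Some (Pr (prio t u))"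
proof -
  obtain j where "t u = Some (Pr j)"
    using assms by (elim actE) blast
  then show ?thesis by (simp add: prio_def)
qed

lemma sig_step_fixpoint_iff:
  "s_eqs i k P t S f \<and> (\<forall>u. u \<notin> S \<longrightarrow> f u = (\<lambda>_. ozero))
    \<longleftrightarrow> (\<forall>u. f u = sig_step i k P t S f u)"
proof
  assume f: "s_eqs i k P t S f \<and> (\<forall>u. u \<notin> S \<longrightarrow> f u = (\<lambda>_. ozero))"
  show "\<forall>u. f u = sig_step i k P t S f u"
  proof
    fix u
    consider "u \<notin> S" | "u \<in> S" "u \<in> act i k P t S" | "u \<in> S" "u \<notin> act i k P t S"
      by blast
    then show "f u = sig_step i k P t S f u"
    proof cases
      case 2
      then have "f u = bump (prio t u) (f (u @ [0]))"
        using f prio_active[of u] unfolding s_eqs_def by blast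
      with 2 show ?thesis unfolding sig_step_def by simp
    qed (use f in \<open>auto simp: s_eqs_def sig_step_def\<close>)
  qed
next
  assume fixpoint: "\<forall>u. f u = sig_step i k P t S f u"
  show "s_eqs i k P t S f \<and> (\<forall>u. u \<notin> S \<longrightarrow> f u = (\<lambda>_. ozero))"
    unfolding s_eqs_def
  proof (intro conjI ballI allI impI)
    fix u j assume "u \<in> S" "u \<in> act i k P t S" "t u = Some (Pr j)"
    then show "f u = bump j (f (u @ [0]))"
      using fixpoint[rule_format, of u] unfolding sig_step_def prio_def by simp
  next
    fix u assume "u \<in> S" "u \<notin> act i k P t S"
    then show "f u = lex_sup (Lset i k P) (f ` succs i k P t S u)"
      using fixpoint[rule_format, of u] unfolding sig_step_def by simp
  next
    fix u assume "u \<notin> S"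
    then show "f u = (\<lambda>_. ozero)"
      using fixpoint[rule_format, of u] unfolding sig_step_def by simp
  qed
qed

lemma sig_step_cong:
  assumes "\<And>w. (w, u) \<in> sig_dep i k P t S \<Longrightarrow> f w = g w"
  shows "sig_step i k P t S f u = sig_step i k P t S g u"
  using assms unfolding sig_step_def sig_dep_def by (simp cong: image_cong)

lemma stup_exists_unique:
  assumes "finitely_active i k P t S"
  shows "\<exists>!f :: nat list \<Rightarrow> nat \<Rightarrow> 'o::wellorder.
           s_eqs i k P t S f \<and> (\<forall>u. u \<notin> S \<longrightarrow> f u = (\<lambda>_. ozero))"
proof -
  have wf: "wf (sig_dep i k P t S)"
    using assms by (rule wf_sig_dep)
  define h :: "nat list \<Rightarrow> nat \<Rightarrow> 'o" where "h = wfrec (sig_dep i k P t S) (sig_step i k P t S)"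
  have h: "h u = sig_step i k P t S h u" for u
    unfolding h_def by (subst wfrec[OF wf]) (rule sig_step_cong, rule cut_apply)
  moreover have "f = h" if f: "\<forall>u. f u = sig_step i k P t S f u" for f
  proof
    fix u
    from wf show "f u = h u"
    proof (induction u rule: wf_induct_rule)
      case (less u)
      have "sig_step i k P t S f u = sig_step i k P t S h u"
        by (rule sig_step_cong) (rule less.IH)
      then show ?case
        using f[rule_format, of u] h[of u] by (simp only:)
    qed
  qed
  ultimately show ?thesis
    unfolding sig_step_fixpoint_iff by blast
qed

context
  fixes i k :: nat and P :: player and t :: tree and S :: "nat list set"
  assumes fin: "finitely_active i k P t S"
begin

lemma stup_eqs:
  "s_eqs i k P t S (stup i k P t S :: nat list \<Rightarrow> nat \<Rightarrow> 'o::wellorder)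
     \<and> (\<forall>u. u \<notin> S \<longrightarrow> (stup i k P t S u :: nat \<Rightarrow> 'o) = (\<lambda>_. ozero))"
  unfolding stup_def by (rule theI'[OF stup_exists_unique[OF fin]])

lemma stup_unique:
  assumes "s_eqs i k P t S f" and "\<forall>u. u \<notin> S \<longrightarrow> f u = (\<lambda>_. ozero)"
  shows "stup i k P t S = (f :: nat list \<Rightarrow> nat \<Rightarrow> 'o::wellorder)"
  unfolding stup_def using the1_equality[OF stup_exists_unique[OF fin]] assms by blast

lemma stup_not_in:
  "u \<notin> S \<Longrightarrow> (stup i k P t S u :: nat \<Rightarrow> 'o::wellorder) = (\<lambda>_. ozero)"
  using stup_eqs by blast

lemma stup_active:
  "u \<in> act i k P t S \<Longrightarrow> t u = Some (Pr j)
    \<Longrightarrow> (stup i k P t S u :: nat \<Rightarrow> 'o::wellorder) = bump j (stup i k P t S (u @ [0]))"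
  using stup_eqs unfolding s_eqs_def by (blast elim: actE)

lemma stup_inactive:
  "u \<in> S \<Longrightarrow> u \<notin> act i k P t S
    \<Longrightarrow> (stup i k P t S u :: nat \<Rightarrow> 'o::wellorder) = lex_sup (Lset i k P) (stup i k P t S ` succs i k P t S u)"
  using stup_eqs unfolding s_eqs_def by blast

end

context
  fixes i k :: nat and P :: player and t :: tree and S :: "nat list set"
  assumes tree: "is_tree i k t" and strat: "strategy t P S"
begin

lemma unary_child_in_strategy:
  assumes "u \<in> S" and "t u = Some (Pr j)"
  shows "u @ [0] \<in> S"
proof -
  have "\<not> controlled t P u"
    using assms(2) unfolding controlled_def by (cases P) auto
  moreover have "t (u @ [0]) \<noteq> None"
    using tree assms(2) unfolding is_tree_def by force
  ultimately show ?thesis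
    using strat assms(1) unfolding strategy_def by blast
qed

lemma strategy_below_unary:
  assumes "t u = Some (Pr j)" and "w \<in> S" and "strict_prefix u w"
  shows "prefix (u @ [0]) w"
proof -
  obtain n r where w: "w = u @ n # r"
    using assms(3) by (auto elim: strict_prefixE')
  have "t w \<noteq> None"
    using strat assms(2) unfolding strategy_def by blast
  then have "t (u @ [n]) \<noteq> None"
    using tree w unfolding is_tree_def by (metis append.assoc append_Cons append_Nil)
  with tree assms(1) have "n = 0"
    unfolding is_tree_def by fastforce
  with w show ?thesis by simp
qed

lemma act_at_active_le:
  assumes "u \<in> act i k P t S" and "t u = Some (Pr j')" and "j' \<le> j"
  shows "act_at i k P t S u j = insert u (act_at i k P t S (u @ [0]) j)"
proof -
  have "prefix (u @ [0]) w" if "w \<in> act_at i k P t S u j" "w \<noteq> u" for w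
    using that strategy_below_unary[OF assms(2)] unfolding act_at_def
    by (auto simp: strict_prefix_def elim: actE)
  with assms show ?thesis
    unfolding act_at_def by (auto dest: append_prefixD)
qed

lemma act_at_active_gt:
  assumes "u \<in> act i k P t S" and "t u = Some (Pr j')" and "j < j'"
  shows "act_at i k P t S u j = act_at i k P t S (u @ [0]) j"
proof -
  have "prefix (u @ [0]) w" if "w \<in> act_at i k P t S u j" for w
  proof -
    have "w \<noteq> u" using that assms(2,3) unfolding act_at_def by auto
    with that show ?thesis
      using strategy_below_unary[OF assms(2)] unfolding act_at_def
      by (auto simp: strict_prefix_def elim: actE)
  qed
  then show ?thesis
    unfolding act_at_def by (auto dest: append_prefixD)
qed

end

lemma act_at_inactive:
  assumes "u \<notin> act i k P t S"
  shows "act_at i k P t S u j = (\<Union>w\<in>succs i k P t S u. act_at i k P t S w j)"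
proof
  show "(\<Union>w\<in>succs i k P t S u. act_at i k P t S w j) \<subseteq> act_at i k P t S u j"
    unfolding act_at_def succs_def by (auto intro: prefix_order.trans)
next
  show "act_at i k P t S u j \<subseteq> (\<Union>w\<in>succs i k P t S u. act_at i k P t S w j)"
  proof
    fix e assume e: "e \<in> act_at i k P t S u j"
    let ?between = "\<lambda>w. w \<in> act i k P t S \<and> prefix u w \<and> prefix w e"
    have "?between e" using e unfolding act_at_def by auto
    then obtain w where w: "?between w" and shortest: "\<And>w'. ?between w' \<Longrightarrow> length w \<le> length w'"
      using ex_has_least_nat[of ?between e length] by blast
    have "w \<in> succs i k P t S u"
      unfolding succs_def
    proof (intro CollectI conjI notI)
      assume "\<exists>w'\<in>act i k P t S. prefix u w' \<and> strict_prefix w' w"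
      then obtain w' where "w' \<in> act i k P t S" "prefix u w'" "strict_prefix w' w" by blast
      with w shortest[of w'] show False
        using prefix_length_less by (fastforce intro: prefix_order.trans)
    qed (use w in auto)
    moreover have "e \<in> act_at i k P t S w j"
      using e w unfolding act_at_def by auto
    ultimately show "e \<in> (\<Union>w\<in>succs i k P t S u. act_at i k P t S w j)" by blast
  qed
qed

lemma strict_prefix_append_iff:
  "strict_prefix z (w @ x) \<longleftrightarrow> strict_prefix z w \<or> (\<exists>y. z = w @ y \<and> strict_prefix y x)"
  by (auto simp: strict_prefix_def prefix_append)

lemma act_subtree:
  assumes w: "w \<in> act i k P t S"
  shows "x \<in> act i k P (subtree t w) (substrat S w) \<longleftrightarrow> w @ x \<in> act i k P t S"
proof
  assume "w @ x \<in> act i k P t S"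
  then show "x \<in> act i k P (subtree t w) (substrat S w)"
    unfolding act_def subtree_def substrat_def by (auto simp: strict_prefix_append_iff)
next
  assume x: "x \<in> act i k P (subtree t w) (substrat S w)"
  then obtain j where j: "w @ x \<in> S" "t (w @ x) = Some (Pr j)" "losing i k P j"
    "\<And>y. strict_prefix y x \<Longrightarrow> t (w @ y) \<noteq> Some Sw"
    "\<And>y j'. strict_prefix y x \<Longrightarrow> t (w @ y) = Some (Pr j') \<Longrightarrow> j \<le> j'"
    unfolding subtree_def substrat_def by (elim actE) auto
  obtain jw where jw: "t w = Some (Pr jw)"
    "\<And>z. strict_prefix z w \<Longrightarrow> t z \<noteq> Some Sw"
    "\<And>z j'. strict_prefix z w \<Longrightarrow> t z = Some (Pr j') \<Longrightarrow> jw \<le> j'"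
    using w by (elim actE) blast
  \<comment> \<open>The label of the node w itself bounds j from above, so the constraints on
    prefixes above w carry over.\<close>
  have "j \<le> jw"
  proof (cases "x = []")
    case False
    then have "strict_prefix [] x" by (simp add: strict_prefix_def)
    with j(5) jw(1) show ?thesis by simp
  qed (use j(2) jw(1) in simp)
  have "t z \<noteq> Some Sw \<and> (\<forall>j'. t z = Some (Pr j') \<longrightarrow> \<not> j' < j)" if "strict_prefix z (w @ x)" for z
    using that j(4,5) jw(2,3) \<open>j \<le> jw\<close> unfolding strict_prefix_append_iff by fastforce
  with j(1-3) show "w @ x \<in> act i k P t S"
    unfolding act_def by blast
qed

lemma succs_subtree:
  assumes w: "w \<in> act i k P t S"
  shows "(\<lambda>y. w @ y) ` succs i k P (subtree t w) (substrat S w) x = succs i k P t S (w @ x)"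
proof -
  let ?act' = "act i k P (subtree t w) (substrat S w)"
  have below: "\<exists>y. z = w @ y \<and> prefix x y" if "prefix (w @ x) z" for z
    using that by (auto simp: prefix_def)
  have shift: "strict_prefix (w @ a) (w @ b) \<longleftrightarrow> strict_prefix a b" for a b :: "nat list"
    by (simp add: strict_prefix_def)
  have "w @ y \<in> succs i k P t S (w @ x) \<longleftrightarrow> y \<in> succs i k P (subtree t w) (substrat S w) x" for y
  proof -
    have "(\<exists>w'\<in>act i k P t S. prefix (w @ x) w' \<and> strict_prefix w' (w @ y))
        \<longleftrightarrow> (\<exists>y'\<in>?act'. prefix x y' \<and> strict_prefix y' y)"
    proof
      assume "\<exists>w'\<in>act i k P t S. prefix (w @ x) w' \<and> strict_prefix w' (w @ y)"
      then obtain w' where "w' \<in> act i k P t S" "prefix (w @ x) w'" "strict_prefix w' (w @ y)"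
        by blast
      moreover from this obtain y' where "w' = w @ y'" "prefix x y'"
        using below by blast
      ultimately show "\<exists>y'\<in>?act'. prefix x y' \<and> strict_prefix y' y"
        using act_subtree[OF w] shift by auto
    next
      assume "\<exists>y'\<in>?act'. prefix x y' \<and> strict_prefix y' y"
      then show "\<exists>w'\<in>act i k P t S. prefix (w @ x) w' \<and> strict_prefix w' (w @ y)"
        using act_subtree[OF w] shift by (metis same_prefix_prefix)
    qed
    then show ?thesis
      unfolding succs_def mem_Collect_eq act_subtree[OF w] same_prefix_prefix by blast
  qed
  moreover have "e \<in> (\<lambda>y. w @ y) ` succs i k P (subtree t w) (substrat S w) x"
    if e: "e \<in> succs i k P t S (w @ x)" for e
  proof -
    obtain y where "e = w @ y"
      using e below succs_act by blast
    with e calculation show ?thesis by blast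
  qed
  ultimately show ?thesis by auto
qed

lemma finitely_active_subtree:
  assumes fin: "finitely_active i k P t S" and w: "w \<in> act i k P t S"
  shows "finitely_active i k P (subtree t w) (substrat S w)"
  unfolding finitely_active_def
proof (intro allI notI)
  fix \<pi>' assume inf: "\<exists>\<^sub>\<infinity>n. node \<pi>' n \<in> act i k P (subtree t w) (substrat S w)"
  define \<pi> where "\<pi> n = (if n < length w then w ! n else \<pi>' (n - length w))" for n
  have node_shift: "node \<pi> (length w + n) = w @ node \<pi>' n" for n
    unfolding node_def by (rule nth_equalityI) (auto simp: nth_append \<pi>_def)
  have "\<exists>\<^sub>\<infinity>n. node \<pi> (length w + n) \<in> act i k P t S"
    using inf by (simp add: node_shift act_subtree[OF w])
  then have "\<exists>\<^sub>\<infinity>n. node \<pi> n \<in> act i k P t S"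
    unfolding INFM_nat_le by (meson le_add2 order.trans)
  with fin show False
    unfolding finitely_active_def by blast
qed

lemma stup_subtree:
  assumes fin: "finitely_active i k P t S" and w: "w \<in> act i k P t S"
  shows "(stup i k P (subtree t w) (substrat S w) :: nat list \<Rightarrow> nat \<Rightarrow> 'o::wellorder)
      = (\<lambda>x. stup i k P t S (w @ x))"
proof (rule stup_unique[OF finitely_active_subtree[OF fin w]])
  show "\<forall>x. x \<notin> substrat S w \<longrightarrow> (stup i k P t S (w @ x) :: nat \<Rightarrow> 'o) = (\<lambda>_. ozero)"
    by (auto simp: substrat_def intro: stup_not_in[OF fin])
  show "s_eqs i k P (subtree t w) (substrat S w) (\<lambda>x. stup i k P t S (w @ x) :: nat \<Rightarrow> 'o)"
    unfolding s_eqs_def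
  proof (intro ballI conjI impI allI)
    fix x j assume "x \<in> act i k P (subtree t w) (substrat S w)" "subtree t w x = Some (Pr j)"
    then show "(stup i k P t S (w @ x) :: nat \<Rightarrow> 'o) = bump j (stup i k P t S (w @ x @ [0]))"
      using stup_active[OF fin, of "w @ x" j] act_subtree[OF w] by (simp add: subtree_def)
  next
    fix x assume "x \<in> substrat S w" "x \<notin> act i k P (subtree t w) (substrat S w)"
    then have "(stup i k P t S (w @ x) :: nat \<Rightarrow> 'o)
        = lex_sup (Lset i k P) (stup i k P t S ` succs i k P t S (w @ x))"
      using stup_inactive[OF fin, of "w @ x"] act_subtree[OF w] by (simp add: substrat_def)
    then show "(stup i k P t S (w @ x) :: nat \<Rightarrow> 'o) = lex_sup (Lset i k P)
        ((\<lambda>x. stup i k P t S (w @ x)) ` succs i k P (subtree t w) (substrat S w) x)"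
      by (simp add: succs_subtree[OF w, symmetric] image_image)
  qed
qed

section \<open>Truncated signatures as suprema over active nodes\<close>

lemma finite_Lset: "finite (Lset i k P)"
  unfolding Lset_def losing_def by (rule finite_subset[of _ "{..k}"]) auto

context
  fixes i k :: nat and P :: player and t :: tree and S :: "nat list set"
  assumes ords: "countably_bounded TYPE('o::wellorder)" and fin: "finitely_active i k P t S"
begin

lemma is_lex_sup_stup_inactive:
  assumes "u \<in> S" and "u \<notin> act i k P t S"
  shows "is_lex_sup (Lset i k P) (stup i k P t S ` succs i k P t S u) (stup i k P t S u :: nat \<Rightarrow> 'o)"
proof -
  have "countable (stup i k P t S ` succs i k P t S u :: (nat \<Rightarrow> 'o) set)"
    by (intro countable_image countableI_type)
  then obtain y :: "nat \<Rightarrow> 'o" where y: "is_lex_sup (Lset i k P) (stup i k P t S ` succs i k P t S u) y"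
    using is_lex_sup_exists[OF ords finite_Lset] by blast
  moreover have "stup i k P t S u = y"
    by (simp add: stup_inactive[OF fin assms] lex_sup_eqI[OF y])
  ultimately show ?thesis by simp
qed

lemma stup_supported: "supported (Lset i k P) (stup i k P t S u :: nat \<Rightarrow> 'o)"
proof (induction u rule: wf_induct_rule[OF wf_sig_dep[OF fin]])
  case (1 u)
  consider "u \<notin> S" | "u \<in> act i k P t S" | "u \<in> S" "u \<notin> act i k P t S" by blast
  then show ?case
  proof cases
    case 1
    then show ?thesis by (simp add: supported_def stup_not_in[OF fin])
  next
    case 2
    then obtain j where "t u = Some (Pr j)" "losing i k P j" by (elim actE) blast
    moreover have "supported (Lset i k P) (stup i k P t S (u @ [0]) :: nat \<Rightarrow> 'o)"
      using 2 "1.IH" by (simp add: sig_dep_def)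
    ultimately show ?thesis
      using 2 by (simp add: stup_active[OF fin] supported_bump Lset_def)
  next
    case 3
    then show ?thesis using is_lex_sup_stup_inactive is_lex_sup_supported by blast
  qed
qed

end

lemma is_lex_sup_act_at_active_step:
  assumes ords: "countably_bounded TYPE('o::wellorder)" and tree: "is_tree i k t"
    and strat: "strategy t P S" and fin: "finitely_active i k P t S"
    and u: "u \<in> act i k P t S"
    and IH: "is_lex_sup (Lset i k P \<inter> {..j})
      ((\<lambda>w. restr j (stup i k P t S w :: nat \<Rightarrow> 'o)) ` act_at i k P t S (u @ [0]) j)
      (restr j (stup i k P t S (u @ [0])))"
  shows "is_lex_sup (Lset i k P \<inter> {..j})
      ((\<lambda>w. restr j (stup i k P t S w :: nat \<Rightarrow> 'o)) ` act_at i k P t S u j)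
      (restr j (stup i k P t S u))"
proof -
  let ?L = "Lset i k P \<inter> {..j}"
  let ?g = "\<lambda>w. restr j (stup i k P t S w :: nat \<Rightarrow> 'o)"
  obtain j' where j': "t u = Some (Pr j')" "losing i k P j'"
    using u by (elim actE) blast
  have stup_u: "stup i k P t S u = bump j' (stup i k P t S (u @ [0]) :: nat \<Rightarrow> 'o)"
    using u j'(1) by (rule stup_active[OF fin])
  show ?thesis
  proof (cases "j' \<le> j")
    case True
    with j'(2) have "j' \<in> ?L" by (simp add: Lset_def)
    then have "lexle ?L (stup i k P t S (u @ [0])) (stup i k P t S u :: nat \<Rightarrow> 'o)"
      unfolding stup_u by (rule lexle_bump[OF ords])
    then have "lexle ?L (?g (u @ [0])) (?g u)"
      using lexle_cong[OF restr_agree restr_agree] by blast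
    moreover have "supported ?L (?g u)"
      using stup_supported[OF ords fin] by (rule supported_restr)
    ultimately show ?thesis
      using IH by (simp add: act_at_active_le[OF tree strat u j'(1) True] is_lex_sup_insert)
  next
    case False
    then have "j < j'" by simp
    then have "?g u = ?g (u @ [0])"
      by (simp add: stup_u restr_bump)
    with IH show ?thesis
      by (simp add: act_at_active_gt[OF tree strat u j'(1) \<open>j < j'\<close>])
  qed
qed

lemma is_lex_sup_act_at:
  assumes ords: "countably_bounded TYPE('o::wellorder)" and tree: "is_tree i k t"
    and strat: "strategy t P S" and fin: "finitely_active i k P t S" and "u \<in> S"
  shows "is_lex_sup (Lset i k P \<inter> {..j})
      ((\<lambda>w. restr j (stup i k P t S w :: nat \<Rightarrow> 'o)) ` act_at i k P t S u j)
      (restr j (stup i k P t S u))"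
  using \<open>u \<in> S\<close>
proof (induction u rule: wf_induct_rule[OF wf_sig_dep[OF fin]])
  case (1 u)
  let ?L = "Lset i k P \<inter> {..j}"
  let ?g = "\<lambda>w. restr j (stup i k P t S w :: nat \<Rightarrow> 'o)"
  show ?case
  proof (cases "u \<in> act i k P t S")
    case True
    then obtain j' where "t u = Some (Pr j')"
      by (elim actE) blast
    with tree strat \<open>u \<in> S\<close> have "u @ [0] \<in> S"
      by (rule unary_child_in_strategy)
    with "1.IH" True have "is_lex_sup ?L (?g ` act_at i k P t S (u @ [0]) j) (?g (u @ [0]))"
      by (simp add: sig_dep_def)
    then show ?thesis
      by (rule is_lex_sup_act_at_active_step[OF ords tree strat fin True])
  next
    case False
    have "is_lex_sup ?L (?g ` act_at i k P t S w j) (?g w)" if "w \<in> succs i k P t S u" for w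
      using that "1.IH" False succs_act[OF that] by (auto simp: sig_dep_def elim: actE)
    moreover have "is_lex_sup ?L (restr j ` stup i k P t S ` succs i k P t S u) (?g u)"
      using is_lex_sup_stup_inactive[OF ords fin \<open>u \<in> S\<close> False]
      by (intro is_lex_sup_restr[OF ords]) (simp_all add: countableI_type)
    ultimately show ?thesis
      unfolding act_at_inactive[OF False] image_UN image_image by (rule is_lex_sup_UN)
  qed
qed

theorem mainTheorem10:
  fixes i k j :: nat and P :: player and t :: tree and S :: "nat list set" and u :: "nat list"
  assumes ords: "countably_bounded TYPE('o::wellorder)"
    and ik: "i < k"
    and tree: "is_tree i k t"
    and wf: "well_formed t"
    and win: "winning_strategy k t P S"
    and uS: "u \<in> S"
    and jl: "losing i k P j"
  shows "restr j (stup i k P t S u :: nat \<Rightarrow> 'o)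
           = lex_sup (Lset i k P \<inter> {..j})
               ((\<lambda>w. restr j (stup i k P t S w :: nat \<Rightarrow> 'o)) ` act_at i k P t S u j)
       \<and> restr j (stup i k P t S u :: nat \<Rightarrow> 'o)
           = lex_sup (Lset i k P \<inter> {..j})
               ((\<lambda>w. restr j (stup i k P (subtree t w) (substrat S w) [] :: nat \<Rightarrow> 'o))
                  ` act_at i k P t S u j)"
proof -
  have strat: "strategy t P S" and fin: "finitely_active i k P t S"
    using win winning_strategy_finitely_active unfolding winning_strategy_def by blast+
  have "(stup i k P (subtree t w) (substrat S w) [] :: nat \<Rightarrow> 'o) = stup i k P t S w"
    if "w \<in> act_at i k P t S u j" for w
  proof -
    have "w \<in> act i k P t S"
      using that unfolding act_at_def by blast
    then show ?thesis by (simp add: stup_subtree[OF fin])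
  qed
  then have same_image:
    "(\<lambda>w. restr j (stup i k P (subtree t w) (substrat S w) [] :: nat \<Rightarrow> 'o)) ` act_at i k P t S u j
      = (\<lambda>w. restr j (stup i k P t S w)) ` act_at i k P t S u j"
    by (simp cong: image_cong)
  show ?thesis
    unfolding same_image
    using lex_sup_eqI[OF is_lex_sup_act_at[OF ords tree strat fin uS]] by simp
qed

end
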